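(* Let $X$ be a metric space, $\Omega\subset X$ non-empty, $E$ a non-trivial locally convex Hausdorff space over $\mathbb{K}$ and $\mathcal{FV}(\Omega)$ a dom-space such that $\mathcal{FV}(\Omega)\subset\mathcal{C}^{ext}(\Omega)$ as a linear subspace. If the map $\delta\colon\Omega\to\mathcal{FV}(\Omega)'_\kappa$, $x\mapsto\delta_x$, belongs to $\mathcal{C}^{ext}(\Omega,\mathcal{FV}(\Omega)'_\kappa)$, then $S(u)\in\mathcal{C}^{ext}(\Omega,E)$ for all $u\in\mathcal{FV}(\Omega)\varepsilon E$.
   Context: $\mathbb{K}\in\{\mathbb{R},\mathbb{C}\}$. For a topological vector space $Z$, $\mathcal{C}^{ext}(\Omega,Z)$ is the space of continuous $f\colon\Omega\to Z$ having a continuous extension to the closure $\overline{\Omega}$ of $\Omega$ in $X$; $\mathcal{C}^{ext}(\Omega):=\mathcal{C}^{ext}(\Omega,\mathbb{K})$. Framework: $J,M$ non-empty index sets, $(\omega_m)_{m\in M}$ non-empty sets, $\nu_{j,m}\colon\omega_m\to[0,\infty)$ such that for all $m$, $x\in\omega_m$ some $\nu_{j,m}(x)>0$; $\operatorname{AP}(\Omega)\subset\mathbb{K}^\Omega$ a linear subspace; $T_m\colon\operatorname{dom}T_m\to\mathbb{K}^{\omega_m}$ linear maps on linear subspaces of $\mathbb{K}^\Omega$; $\mathcal{FV}(\Omega):=\{f\in\operatorname{AP}(\Omega)\cap\bigcap_m\operatorname{dom}T_m: |f|_{j,m}:=\sup_{x\in\omega_m}|T_m(f)(x)|\nu_{j,m}(x)<\infty\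 \forall j,m\}$ with these seminorms. It is a dom-space if it is Hausdorff, the seminorms are directed and every $\delta_x\colon f\mapsto f(x)$ belongs to $\mathcal{FV}(\Omega)'$. $\mathcal{FV}(\Omega)'_\kappa$: dual with the topology of uniform convergence on absolutely convex compact subsets of $\mathcal{FV}(\Omega)$. $\mathcal{FV}(\Omega)\varepsilon E$: continuous linear maps $\mathcal{FV}(\Omega)'_\kappa\to E$ with the topology of uniform convergence on equicontinuous sets; $S(u)(x):=u(\delta_x)$. *)

theory Defs
  imports "HOL-Analysis.Analysis" "HOL-Library.Function_Algebras"
begin

text \<open>Scalar field: a type 'k of class real_normed_field (covers K = R and K = C).
  Elements of K^Omega are represented by functions 'x => 'k vanishing outside Omega.\<close>

definition ext_fun :: "'x set \<Rightarrow> ('x \<Rightarrow> 'k::zero) set" where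
  "ext_fun \<Omega> = {f. \<forall>x. x \<notin> \<Omega> \<longrightarrow> f x = 0}"

definition lc :: "'k::real_normed_field \<Rightarrow> ('x \<Rightarrow> 'k) \<Rightarrow> 'k \<Rightarrow> ('x \<Rightarrow> 'k) \<Rightarrow> ('x \<Rightarrow> 'k)" where
  "lc a f b g = (\<lambda>x. a * f x + b * g x)"

definition lin_subspace :: "('x \<Rightarrow> 'k::real_normed_field) set \<Rightarrow> bool" where
  "lin_subspace V \<longleftrightarrow> (\<lambda>_. 0) \<in> V \<and> (\<forall>f\<in>V. \<forall>g\<in>V. \<forall>a b. lc a f b g \<in> V)"

definition lin_on :: "('x \<Rightarrow> 'k::real_normed_field) set \<Rightarrow> (('x \<Rightarrow> 'k) \<Rightarrow> ('w \<Rightarrow> 'k)) \<Rightarrow> bool" where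
  "lin_on V T \<longleftrightarrow> (\<forall>f\<in>V. \<forall>g\<in>V. \<forall>a b. T (lc a f b g) = lc a (T f) b (T g))"

definition FV_space ::
  "('x \<Rightarrow> 'k::real_normed_field) set \<Rightarrow> ('m \<Rightarrow> ('x \<Rightarrow> 'k) set) \<Rightarrow> ('m \<Rightarrow> 'w set)
   \<Rightarrow> ('j \<Rightarrow> 'm \<Rightarrow> 'w \<Rightarrow> real) \<Rightarrow> ('m \<Rightarrow> ('x \<Rightarrow> 'k) \<Rightarrow> ('w \<Rightarrow> 'k)) \<Rightarrow> ('x \<Rightarrow> 'k) set" where
  "FV_space AP domT \<omega> \<nu> T =
     {f \<in> AP \<inter> (\<Inter>m. domT m). \<forall>j m. bdd_above ((\<lambda>w. norm (T m f w) * \<nu> j m w) ` \<omega> m)}"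

definition FV_sn ::
  "('m \<Rightarrow> 'w set) \<Rightarrow> ('j \<Rightarrow> 'm \<Rightarrow> 'w \<Rightarrow> real) \<Rightarrow> ('m \<Rightarrow> ('x \<Rightarrow> 'k::real_normed_field) \<Rightarrow> ('w \<Rightarrow> 'k))
   \<Rightarrow> 'j \<times> 'm \<Rightarrow> ('x \<Rightarrow> 'k) \<Rightarrow> real" where
  "FV_sn \<omega> \<nu> T = (\<lambda>(j, m) f. SUP w\<in>\<omega> m. norm (T m f w) * \<nu> j m w)"

text \<open>Continuity of a linear map u : (V, (p_i)_{i in I}) -> (q_l)_{l in L} between spaces
  whose locally convex topologies are generated by seminorm families.\<close>
definition sn_bounded ::
  "'i set \<Rightarrow> ('i \<Rightarrow> 'a \<Rightarrow> real) \<Rightarrow> 'a set \<Rightarrow> 'l set \<Rightarrow> ('l \<Rightarrow> 'b \<Rightarrow> real) \<Rightarrow> ('a \<Rightarrow> 'b) \<Rightarrow> bool" where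
  "sn_bounded I p V L q u \<longleftrightarrow>
     (\<forall>l\<in>L. \<exists>F C. finite F \<and> F \<subseteq> I \<and> (\<forall>v\<in>V. q l (u v) \<le> C * (\<Sum>i\<in>F. p i v)))"

definition sn_topology :: "'i set \<Rightarrow> ('i \<Rightarrow> 'a::ab_group_add \<Rightarrow> real) \<Rightarrow> 'a set \<Rightarrow> 'a topology" where
  "sn_topology I p V = topology (\<lambda>U. U \<subseteq> V \<and>
     (\<forall>f\<in>U. \<exists>F e. finite F \<and> F \<subseteq> I \<and> e > 0 \<and> {g \<in> V. \<forall>i\<in>F. p i (g - f) < e} \<subseteq> U))"

definition dual_space :: "('i \<Rightarrow> ('x \<Rightarrow> 'k::real_normed_field) \<Rightarrow> real) \<Rightarrow> ('x \<Rightarrow> 'k) set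
   \<Rightarrow> (('x \<Rightarrow> 'k) \<Rightarrow> 'k) set" where
  "dual_space p V = {y. (\<forall>f\<in>V. \<forall>g\<in>V. \<forall>a b. y (lc a f b g) = a * y f + b * y g)
      \<and> sn_bounded UNIV p V (UNIV :: unit set) (\<lambda>_. norm) y
      \<and> (\<forall>f. f \<notin> V \<longrightarrow> y f = 0)}"

definition delta :: "('x \<Rightarrow> 'k::zero) set \<Rightarrow> 'x \<Rightarrow> (('x \<Rightarrow> 'k) \<Rightarrow> 'k)" where
  "delta V x = (\<lambda>f. if f \<in> V then f x else 0)"

definition abs_convex :: "('x \<Rightarrow> 'k::real_normed_field) set \<Rightarrow> bool" where
  "abs_convex K \<longleftrightarrow> (\<forall>f\<in>K. \<forall>g\<in>K. \<forall>a b. norm a + norm b \<le> 1 \<longrightarrow> lc a f b g \<in> K)"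

text \<open>index set of the seminorms of V'_kappa: absolutely convex compact subsets of V\<close>
definition kappa_sets :: "('i \<Rightarrow> ('x \<Rightarrow> 'k::real_normed_field) \<Rightarrow> real) \<Rightarrow> ('x \<Rightarrow> 'k) set
   \<Rightarrow> ('x \<Rightarrow> 'k) set set" where
  "kappa_sets p V = {K. K \<subseteq> V \<and> abs_convex K \<and> compactin (sn_topology UNIV p V) K}"

definition kappa_sn :: "('x \<Rightarrow> 'k::real_normed_field) set \<Rightarrow> (('x \<Rightarrow> 'k) \<Rightarrow> 'k) \<Rightarrow> real" where
  "kappa_sn K y = Sup (insert 0 ((\<lambda>f. norm (y f)) ` K))"

text \<open>epsilon product V eps E: continuous linear maps V'_kappa -> E\<close>
definition eps_prod :: "('i \<Rightarrow> ('x \<Rightarrow> 'k::real_normed_field) \<Rightarrow> real) \<Rightarrow> ('x \<Rightarrow> 'k) set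
   \<Rightarrow> ('k \<Rightarrow> 'e \<Rightarrow> 'e) \<Rightarrow> ('l \<Rightarrow> 'e::ab_group_add \<Rightarrow> real) \<Rightarrow> ((('x \<Rightarrow> 'k) \<Rightarrow> 'k) \<Rightarrow> 'e) set" where
  "eps_prod p V sc q = {u.
     (\<forall>y\<in>dual_space p V. \<forall>z\<in>dual_space p V. \<forall>a b.
         u (\<lambda>f. a * y f + b * z f) = sc a (u y) + sc b (u z))
     \<and> sn_bounded (kappa_sets p V) kappa_sn (dual_space p V) UNIV q u}"

definition Cext :: "'x::metric_space set \<Rightarrow> 'l set \<Rightarrow> ('l \<Rightarrow> 'z::ab_group_add \<Rightarrow> real) \<Rightarrow> 'z set
   \<Rightarrow> ('x \<Rightarrow> 'z) set" where
  "Cext \<Omega> L q Z = {f. (\<forall>x\<in>\<Omega>. f x \<in> Z) \<and>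
     (\<exists>g. (\<forall>x\<in>closure \<Omega>. g x \<in> Z) \<and> (\<forall>x\<in>\<Omega>. g x = f x) \<and>
        (\<forall>z\<in>closure \<Omega>. \<forall>l\<in>L. ((\<lambda>x. q l (g x - g z)) \<longlongrightarrow> 0) (at z within closure \<Omega>)))}"

definition seminorm_on :: "('k::real_normed_field \<Rightarrow> 'e::ab_group_add \<Rightarrow> 'e) \<Rightarrow> ('e \<Rightarrow> real) \<Rightarrow> bool" where
  "seminorm_on sc s \<longleftrightarrow> (\<forall>x. 0 \<le> s x) \<and> (\<forall>x y. s (x + y) \<le> s x + s y)
     \<and> (\<forall>a x. s (sc a x) = norm a * s x)"

end

theory Submission
  imports Defs
begin

text \<open>The continuous extension of \<open>S(u)\<close> is \<open>u \<circ> g\<close>, where \<open>g\<close> is the continuous extension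
  of \<open>\<delta>\<close> to the closure of \<open>\<Omega>\<close>: since \<open>u\<close> is continuous on \<open>FV(\<Omega>)'\<^sub>\<kappa>\<close>, each seminorm
  \<open>q\<^sub>l(u(g x) - u(g z)) = q\<^sub>l(u(g x - g z))\<close> is dominated by finitely many seminorms
  \<open>sup\<^sub>K |g x - g z|\<close> of \<open>FV(\<Omega>)'\<^sub>\<kappa>\<close>, which tend to \<open>0\<close> as \<open>x \<rightarrow> z\<close>.\<close>

lemma FV_sn_nonneg:
  assumes "\<forall>m. \<omega> m \<noteq> {}" "\<forall>j m w. 0 \<le> \<nu> j m w" "f \<in> FV_space AP domT \<omega> \<nu> T"
  shows "0 \<le> FV_sn \<omega> \<nu> T i f"
proof (cases i)
  case (Pair j m)
  obtain w where w: "w \<in> \<omega> m" using assms(1) by blast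
  have bdd: "bdd_above ((\<lambda>w. norm (T m f w) * \<nu> j m w) ` \<omega> m)"
    using assms(3) unfolding FV_space_def by auto
  have "0 \<le> norm (T m f w) * \<nu> j m w" using assms(2) by simp
  also have "\<dots> \<le> (SUP w\<in>\<omega> m. norm (T m f w) * \<nu> j m w)"
    by (rule cSUP_upper[OF w bdd])
  finally show ?thesis using Pair by (simp add: FV_sn_def)
qed

lemma sn_bounded_diff:
  fixes y z :: "'a \<Rightarrow> 'b::real_normed_vector"
  assumes nonneg: "\<forall>i\<in>I. \<forall>v\<in>V. 0 \<le> p i v"
    and y: "sn_bounded I p V L (\<lambda>_. norm) y" and z: "sn_bounded I p V L (\<lambda>_. norm) z"
  shows "sn_bounded I p V L (\<lambda>_. norm) (\<lambda>v. y v - z v)"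
  unfolding sn_bounded_def
proof
  fix l assume l: "l \<in> L"
  obtain F1 C1 where F1: "finite F1" "F1 \<subseteq> I" "\<forall>v\<in>V. norm (y v) \<le> C1 * (\<Sum>i\<in>F1. p i v)"
    using y l unfolding sn_bounded_def by blast
  obtain F2 C2 where F2: "finite F2" "F2 \<subseteq> I" "\<forall>v\<in>V. norm (z v) \<le> C2 * (\<Sum>i\<in>F2. p i v)"
    using z l unfolding sn_bounded_def by blast
  have dominate: "C * (\<Sum>i\<in>F. p i v) \<le> \<bar>C\<bar> * (\<Sum>i\<in>F1 \<union> F2. p i v)"
    if F: "F \<subseteq> F1 \<union> F2" and v: "v \<in> V" for F C v
  proof -
    have F_nonneg: "0 \<le> p i v" if "i \<in> F1 \<union> F2" for i
      using that F1(2) F2(2) nonneg v by blast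
    have "0 \<le> (\<Sum>i\<in>F. p i v)"
      using F F_nonneg by (meson subsetD sum_nonneg)
    moreover have "(\<Sum>i\<in>F. p i v) \<le> (\<Sum>i\<in>F1 \<union> F2. p i v)"
      using F F1(1) F2(1) F_nonneg by (intro sum_mono2) auto
    ultimately show ?thesis
      by (meson abs_ge_self abs_ge_zero mult_left_mono mult_right_mono order_trans)
  qed
  have "norm (y v - z v) \<le> (\<bar>C1\<bar> + \<bar>C2\<bar>) * (\<Sum>i\<in>F1 \<union> F2. p i v)" if v: "v \<in> V" for v
  proof -
    have "norm (y v - z v) \<le> C1 * (\<Sum>i\<in>F1. p i v) + C2 * (\<Sum>i\<in>F2. p i v)"
      using norm_triangle_ineq4[of "y v" "z v"] F1(3) F2(3) v by fastforce
    also have "\<dots> \<le> (\<bar>C1\<bar> + \<bar>C2\<bar>) * (\<Sum>i\<in>F1 \<union> F2. p i v)"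
      using dominate[where F = F1 and C = C1] dominate[where F = F2 and C = C2] v
      by (simp add: distrib_right add_mono)
    finally show ?thesis .
  qed
  then show "\<exists>F C. finite F \<and> F \<subseteq> I \<and> (\<forall>v\<in>V. norm (y v - z v) \<le> C * (\<Sum>i\<in>F. p i v))"
    using F1 F2 by (metis finite_UnI le_sup_iff)
qed

lemma dual_space_diff:
  assumes "\<forall>i. \<forall>v\<in>V. 0 \<le> p i v" "y \<in> dual_space p V" "z \<in> dual_space p V"
  shows "y - z \<in> dual_space p V"
proof -
  have "sn_bounded UNIV p V (UNIV :: unit set) (\<lambda>_. norm) (\<lambda>v. y v - z v)"
    using assms by (intro sn_bounded_diff) (auto simp: dual_space_def)
  moreover have "(\<lambda>v. y v - z v) = y - z" by (simp add: fun_eq_iff)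
  ultimately show ?thesis
    using assms(2,3) by (simp add: dual_space_def algebra_simps)
qed

lemma eps_prod_diff:
  assumes "vector_space sc" "u \<in> eps_prod p V sc q"
    and "y \<in> dual_space p V" "z \<in> dual_space p V"
  shows "u (y - z) = u y - u z"
proof -
  interpret E: vector_space sc by (rule assms(1))
  have "u (\<lambda>f. 1 * y f + (-1) * z f) = sc 1 (u y) + sc (-1) (u z)"
    using assms(2-4) unfolding eps_prod_def by blast
  moreover have "(\<lambda>f. 1 * y f + (-1) * z f) = y - z" by (auto simp: fun_eq_iff)
  ultimately show ?thesis by simp
qed

lemma sn_bounded_tendsto_zero:
  assumes u: "sn_bounded I p D L q u" and l: "l \<in> L" and q_nonneg: "\<forall>e. 0 \<le> q l e"
    and h: "\<forall>\<^sub>F x in F. h x \<in> D" and lim: "\<forall>i\<in>I. ((\<lambda>x. p i (h x)) \<longlongrightarrow> 0) F"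
  shows "((\<lambda>x. q l (u (h x))) \<longlongrightarrow> 0) F"
proof -
  obtain G C where G: "finite G" "G \<subseteq> I" and bound: "\<forall>v\<in>D. q l (u v) \<le> C * (\<Sum>i\<in>G. p i v)"
    using u l unfolding sn_bounded_def by blast
  have "((\<lambda>x. C * (\<Sum>i\<in>G. p i (h x))) \<longlongrightarrow> C * (\<Sum>i\<in>G. 0)) F"
    using G lim by (intro tendsto_mult_left tendsto_sum) auto
  then have upper: "((\<lambda>x. C * (\<Sum>i\<in>G. p i (h x))) \<longlongrightarrow> 0) F"
    by simp
  have "\<forall>\<^sub>F x in F. q l (u (h x)) \<le> C * (\<Sum>i\<in>G. p i (h x))"
    using h by eventually_elim (use bound in blast)
  moreover have "\<forall>\<^sub>F x in F. 0 \<le> q l (u (h x))"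
    using q_nonneg by simp
  ultimately show ?thesis
    using tendsto_sandwich[OF _ _ tendsto_const upper, of "\<lambda>x. q l (u (h x))"] by blast
qed

lemma eps_prod_comp_Cext:
  assumes E_vs: "vector_space sc" and q_nonneg: "\<forall>l e. 0 \<le> q l e"
    and p_nonneg: "\<forall>i. \<forall>v\<in>V. 0 \<le> p i v"
    and u: "u \<in> eps_prod p V sc q"
    and d: "d \<in> Cext \<Omega> (kappa_sets p V) kappa_sn (dual_space p V)"
  shows "(\<lambda>x. u (d x)) \<in> Cext \<Omega> UNIV q UNIV"
proof -
  define D where "D = dual_space p V"
  obtain g where gD: "\<forall>x\<in>closure \<Omega>. g x \<in> D" and g_ext: "\<forall>x\<in>\<Omega>. g x = d x"
    and g_cont: "\<forall>z\<in>closure \<Omega>. \<forall>K\<in>kappa_sets p V.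
                   ((\<lambda>x. kappa_sn K (g x - g z)) \<longlongrightarrow> 0) (at z within closure \<Omega>)"
    using d unfolding D_def[symmetric] Cext_def by blast
  have u_bounded: "sn_bounded (kappa_sets p V) kappa_sn D UNIV q u"
    using u unfolding eps_prod_def D_def by blast
  have "((\<lambda>x. q l (u (g x) - u (g z))) \<longlongrightarrow> 0) (at z within closure \<Omega>)"
    if z: "z \<in> closure \<Omega>" for z l
  proof -
    have "\<forall>\<^sub>F x in at z within closure \<Omega>. x \<in> closure \<Omega>"
      by (simp add: eventually_at_filter)
    then have ev: "\<forall>\<^sub>F x in at z within closure \<Omega>.
                     g x - g z \<in> D \<and> u (g x - g z) = u (g x) - u (g z)"
      by eventually_elim
        (use gD z dual_space_diff[OF p_nonneg] eps_prod_diff[OF E_vs u] in \<open>simp add: D_def\<close>)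
    then have "\<forall>\<^sub>F x in at z within closure \<Omega>. g x - g z \<in> D"
      by (rule eventually_mono) blast
    then have "((\<lambda>x. q l (u (g x - g z))) \<longlongrightarrow> 0) (at z within closure \<Omega>)"
      using g_cont z q_nonneg by (intro sn_bounded_tendsto_zero[OF u_bounded UNIV_I]) auto
    moreover have "\<forall>\<^sub>F x in at z within closure \<Omega>.
                     q l (u (g x - g z)) = q l (u (g x) - u (g z))"
      using ev by (rule eventually_mono) simp
    ultimately show ?thesis
      by (rule Lim_transform_eventually)
  qed
  then show ?thesis
    unfolding Cext_def using g_ext by (intro CollectI conjI exI[of _ "\<lambda>x. u (g x)"]) auto
qed

theorem proposition4p8:
  fixes \<Omega> :: "'x::metric_space set"
    and AP :: "('x \<Rightarrow> 'k::real_normed_field) set"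
    and domT :: "'m \<Rightarrow> ('x \<Rightarrow> 'k) set"
    and T :: "'m \<Rightarrow> ('x \<Rightarrow> 'k) \<Rightarrow> ('w \<Rightarrow> 'k)"
    and \<omega> :: "'m \<Rightarrow> 'w set"
    and \<nu> :: "'j \<Rightarrow> 'm \<Rightarrow> 'w \<Rightarrow> real"
    and sc :: "'k \<Rightarrow> 'e::ab_group_add \<Rightarrow> 'e"
    and q :: "'l \<Rightarrow> 'e \<Rightarrow> real"
  assumes Omega_ne: "\<Omega> \<noteq> {}"
    \<comment> \<open>E: non-trivial locally convex Hausdorff space, topology given by seminorms q\<close>
    and E_vs: "vector_space sc"
    and E_sn: "\<forall>l. seminorm_on sc (q l)"
    and E_hausdorff: "\<forall>x. x \<noteq> 0 \<longrightarrow> (\<exists>l. q l x \<noteq> 0)"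
    and E_nontrivial: "\<exists>x::'e. x \<noteq> 0"
    \<comment> \<open>framework for FV(Omega)\<close>
    and omega_ne: "\<forall>m. \<omega> m \<noteq> {}"
    and nu_nonneg: "\<forall>j m w. 0 \<le> \<nu> j m w"
    and nu_pos: "\<forall>m. \<forall>w\<in>\<omega> m. \<exists>j. 0 < \<nu> j m w"
    and AP_sub: "AP \<subseteq> ext_fun \<Omega>" and AP_lin: "lin_subspace AP"
    and domT_sub: "\<forall>m. domT m \<subseteq> ext_fun \<Omega>" and domT_lin: "\<forall>m. lin_subspace (domT m)"
    and T_lin: "\<forall>m. lin_on (domT m) (T m)"
    \<comment> \<open>FV(Omega) is a dom-space\<close>
    and FV_hausdorff: "\<forall>f\<in>FV_space AP domT \<omega> \<nu> T. f \<noteq> (\<lambda>_. 0) \<longrightarrow>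
                          (\<exists>i. FV_sn \<omega> \<nu> T i f \<noteq> 0)"
    and FV_directed: "\<forall>i1 i2. \<exists>i C. \<forall>f\<in>FV_space AP domT \<omega> \<nu> T.
                          max (FV_sn \<omega> \<nu> T i1 f) (FV_sn \<omega> \<nu> T i2 f) \<le> C * FV_sn \<omega> \<nu> T i f"
    and FV_delta: "\<forall>x\<in>\<Omega>. delta (FV_space AP domT \<omega> \<nu> T) x
                          \<in> dual_space (FV_sn \<omega> \<nu> T) (FV_space AP domT \<omega> \<nu> T)"
    \<comment> \<open>FV(Omega) is contained in C^ext(Omega)\<close>
    and FV_Cext: "FV_space AP domT \<omega> \<nu> T \<subseteq> Cext \<Omega> (UNIV :: unit set) (\<lambda>_. norm) UNIV"
    \<comment> \<open>delta belongs to C^ext(Omega, FV(Omega)'_kappa)\<close>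
    and delta_Cext: "delta (FV_space AP domT \<omega> \<nu> T) \<in>
          Cext \<Omega> (kappa_sets (FV_sn \<omega> \<nu> T) (FV_space AP domT \<omega> \<nu> T)) kappa_sn
               (dual_space (FV_sn \<omega> \<nu> T) (FV_space AP domT \<omega> \<nu> T))"
  shows "\<forall>u \<in> eps_prod (FV_sn \<omega> \<nu> T) (FV_space AP domT \<omega> \<nu> T) sc q.
           (\<lambda>x. u (delta (FV_space AP domT \<omega> \<nu> T) x)) \<in> Cext \<Omega> UNIV q UNIV"
proof
  fix u assume u: "u \<in> eps_prod (FV_sn \<omega> \<nu> T) (FV_space AP domT \<omega> \<nu> T) sc q"
  have q_nonneg: "\<forall>l e. 0 \<le> q l e" using E_sn unfolding seminorm_on_def by blast
  have FV_nonneg: "\<forall>i. \<forall>f\<in>FV_space AP domT \<omega> \<nu> T. 0 \<le> FV_sn \<omega> \<nu> T i f"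
    using FV_sn_nonneg[OF omega_ne nu_nonneg] by blast
  show "(\<lambda>x. u (delta (FV_space AP domT \<omega> \<nu> T) x)) \<in> Cext \<Omega> UNIV q UNIV"
    by (rule eps_prod_comp_Cext[OF E_vs q_nonneg FV_nonneg u delta_Cext])
qed

end
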